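(* Let $\Omega$ be a countable set, $G$ a closed subgroup of $S=\mathrm{Sym}(\Omega)$, and $\Sigma$ a subset of $\Omega$. Then either (i) there exists a finite set $\Gamma\subseteq\Omega$ such that $G_{(\Gamma)}\le S_{(\Sigma)}$, or (ii) there exists an element $g\in G$ which moves infinitely many members of $\Sigma$.
   Context: $\mathrm{Sym}(\Omega)$ is the group of all permutations of $\Omega$, with the function topology (pointwise convergence, $\Omega$ discrete); "closed" means closed in $S$. For $H\le S$ and $\Gamma\subseteq\Omega$, $H_{(\Gamma)}$ is the pointwise stabilizer of $\Gamma$ in $H$. *)

theory Defs
  imports "HOL-Analysis.Analysis" "HOL-Algebra.Bij"
begin

text \<open>Sym(Omega) is modelled by HOL-Algebra's BijGroup Omega (carrier Bij Omega:
  bijections of Omega, extensional outside Omega).\<close>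

definition sym_topology :: "'a set \<Rightarrow> ('a \<Rightarrow> 'a) topology" where
  "sym_topology \<Omega> = subtopology (product_topology (\<lambda>_. discrete_topology \<Omega>) \<Omega>) (Bij \<Omega>)"

definition pointwise_stabilizer :: "('a \<Rightarrow> 'a) set \<Rightarrow> 'a set \<Rightarrow> ('a \<Rightarrow> 'a) set" where
  "pointwise_stabilizer H \<Gamma> = {h \<in> H. \<forall>x\<in>\<Gamma>. h x = x}"

end

theory Submission
  imports Defs
begin

text \<open>Assume (i) fails. Then for every \<open>g \<in> G\<close> and finite \<open>\<Gamma>\<close> some element of \<open>G\<close>
  agrees with \<open>g\<close> on \<open>\<Gamma>\<close> but moves a point of \<open>\<Sigma> - \<Gamma>\<close>: take \<open>g\<close> itself or
  \<open>g \<circ> h\<close>, where \<open>h \<in> G\<close> fixes \<open>\<Gamma>\<close> pointwise and moves a point of \<open>\<Sigma>\<close>.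
  Iterating this along an enumeration of \<open>\<Omega>\<close>, in a back-and-forth fashion so that the limit
  is onto, yields a coherent sequence in \<open>G\<close> whose pointwise limit is a permutation moving
  infinitely many points of \<open>\<Sigma>\<close>. Every finite restriction of the limit is realised in \<open>G\<close>,
  so it lies in \<open>G\<close> because \<open>G\<close> is closed.\<close>

lemma closedin_sym_topology_pointwise_limit:
  assumes G: "closedin (sym_topology \<Omega>) G" and g: "g \<in> Bij \<Omega>"
    and approx: "\<And>F. finite F \<Longrightarrow> F \<subseteq> \<Omega> \<Longrightarrow> \<exists>h\<in>G. \<forall>x\<in>F. h x = g x"
  shows "g \<in> G"
proof (rule ccontr)
  let ?P = "product_topology (\<lambda>_. discrete_topology \<Omega>) \<Omega>"
  obtain T where T: "closedin ?P T" "G = T \<inter> Bij \<Omega>"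
    using G by (auto simp: sym_topology_def closedin_subtopology)
  have "Bij \<Omega> \<subseteq> topspace ?P"
    by (simp add: subset_iff PiE_def Bij_imp_funcset Bij_imp_extensional)
  moreover assume "g \<notin> G"
  ultimately have "g \<in> topspace ?P - T"
    using T(2) g by blast
  moreover have "openin ?P (topspace ?P - T)"
    using T(1) by (simp add: closedin_def)
  ultimately obtain U where U: "finite {i \<in> \<Omega>. U i \<noteq> topspace (discrete_topology \<Omega>)}"
      "g \<in> Pi\<^sub>E \<Omega> U" "Pi\<^sub>E \<Omega> U \<subseteq> topspace ?P - T"
    unfolding openin_product_topology_alt by blast
  then obtain h where h: "h \<in> G" "\<And>i. i \<in> \<Omega> \<Longrightarrow> U i \<noteq> \<Omega> \<Longrightarrow> h i = g i"
    using approx[of "{i \<in> \<Omega>. U i \<noteq> \<Omega>}"] by auto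
  have "h \<in> Bij \<Omega>"
    using h(1) T(2) by blast
  have "h i \<in> U i" if "i \<in> \<Omega>" for i
  proof (cases "U i = \<Omega>")
    case True
    then show ?thesis
      using Bij_imp_funcset[OF \<open>h \<in> Bij \<Omega>\<close>] that by auto
  next
    case False
    then show ?thesis
      using h(2) U(2) that by (auto simp: PiE_iff)
  qed
  then have "h \<in> Pi\<^sub>E \<Omega> U"
    using Bij_imp_extensional[OF \<open>h \<in> Bij \<Omega>\<close>] by (simp add: PiE_iff)
  then show False
    using U(3) h(1) T(2) by blast
qed

lemma subgroup_agreeing_element_moving_outside:
  assumes G: "subgroup G (BijGroup \<Omega>)" and "\<Sigma> \<subseteq> \<Omega>" and "C \<subseteq> \<Omega>"
    and not_fixing: "\<not> pointwise_stabilizer G C \<subseteq> pointwise_stabilizer (Bij \<Omega>) \<Sigma>"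
    and g: "g \<in> G"
  shows "\<exists>g'\<in>G. \<exists>s\<in>\<Sigma> - C. g' s \<noteq> s \<and> (\<forall>x\<in>C. g' x = g x)"
proof -
  have GB: "G \<subseteq> Bij \<Omega>"
    using subgroup.subset[OF G] by (simp add: BijGroup_def)
  obtain h s where h: "h \<in> G" "\<forall>x\<in>C. h x = x" and s: "s \<in> \<Sigma>" "h s \<noteq> s"
    using not_fixing GB by (auto simp: pointwise_stabilizer_def)
  have "s \<notin> C"
    using h(2) s(2) by blast
  have "g \<in> Bij \<Omega>" "h \<in> Bij \<Omega>"
    using g h(1) GB by auto
  show ?thesis
  proof (cases "g (h s) = s")
    case True
    have "s \<in> \<Omega>" "h s \<in> \<Omega>"
      using s(1) \<open>\<Sigma> \<subseteq> \<Omega>\<close> \<open>h \<in> Bij \<Omega>\<close> Bij_imp_funcset by blast+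
    moreover have "inj_on g \<Omega>"
      using \<open>g \<in> Bij \<Omega>\<close> by (simp add: Bij_def bij_betw_def)
    ultimately have "g s \<noteq> s"
      using True s(2) by (metis inj_onD)
    then show ?thesis
      using g s(1) \<open>s \<notin> C\<close> by blast
  next
    case False
    have "compose \<Omega> g h = g \<otimes>\<^bsub>BijGroup \<Omega>\<^esub> h"
      using \<open>g \<in> Bij \<Omega>\<close> \<open>h \<in> Bij \<Omega>\<close> by (simp add: BijGroup_def)
    then have "compose \<Omega> g h \<in> G"
      using subgroup.m_closed[OF G g h(1)] by simp
    moreover have "compose \<Omega> g h s \<noteq> s"
      using False s(1) \<open>\<Sigma> \<subseteq> \<Omega>\<close> by (auto simp: compose_def)
    moreover have "\<forall>x\<in>C. compose \<Omega> g h x = g x"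
      using h(2) \<open>C \<subseteq> \<Omega>\<close> by (auto simp: compose_def)
    ultimately show ?thesis
      using s(1) \<open>s \<notin> C\<close> by blast
  qed
qed

lemma finite_subset_incseq_Union:
  assumes "incseq C" "finite F" "F \<subseteq> (\<Union>n. C n)"
  obtains n where "F \<subseteq> C n"
  using assms(2,3)
proof (induction F arbitrary: thesis rule: finite_induct)
  case (insert x F)
  obtain n where "F \<subseteq> C n"
    using insert by blast
  moreover obtain m where "x \<in> C m"
    using insert.prems(2) by blast
  ultimately have "insert x F \<subseteq> C (max n m)"
    using monoD[OF \<open>incseq C\<close>, of n "max n m"] monoD[OF \<open>incseq C\<close>, of m "max n m"] by auto
  then show ?case
    by (rule insert.prems(1))
qed simp

definition pointwise_limit :: "(nat \<Rightarrow> 'a \<Rightarrow> 'a) \<Rightarrow> (nat \<Rightarrow> 'a set) \<Rightarrow> 'a set \<Rightarrow> 'a \<Rightarrow> 'a" where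
  "pointwise_limit f C \<Omega> = (\<lambda>x\<in>\<Omega>. f (LEAST n. x \<in> C n) x)"

lemma pointwise_limit_eq:
  assumes "incseq C" "\<And>n. C n \<subseteq> \<Omega>"
    and coherent: "\<And>n x. x \<in> C n \<Longrightarrow> f (Suc n) x = f n x"
    and "x \<in> C n"
  shows "pointwise_limit f C \<Omega> x = f n x"
proof -
  have stable: "f m x = f k x" if "k \<le> m" "x \<in> C k" for m k
    using that(1)
  proof (induction m rule: dec_induct)
    case (step m)
    then show ?case
      using coherent monoD[OF \<open>incseq C\<close> step(1)] that(2) by (simp add: subset_iff)
  qed simp
  let ?k = "LEAST n. x \<in> C n"
  have "x \<in> C ?k" "?k \<le> n"
    using \<open>x \<in> C n\<close> by (auto intro: LeastI Least_le)
  then have "f n x = f ?k x"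
    by (rule stable[rotated])
  moreover have "x \<in> \<Omega>"
    using assms(2,4) by blast
  ultimately show ?thesis
    by (simp add: pointwise_limit_def)
qed

lemma pointwise_limit_Bij:
  assumes f: "\<And>n. f n \<in> Bij \<Omega>" and C: "incseq C" "(\<Union>n. C n) = \<Omega>"
    and coherent: "\<And>n x. x \<in> C n \<Longrightarrow> f (Suc n) x = f n x"
    and onto: "\<Omega> \<subseteq> (\<Union>n. f n ` C n)"
  shows "pointwise_limit f C \<Omega> \<in> Bij \<Omega>"
proof -
  let ?g = "pointwise_limit f C \<Omega>"
  have C_sub: "C n \<subseteq> \<Omega>" for n
    using C(2) by blast
  have g_eq: "?g x = f n x" if "x \<in> C n" for n x
    using C(1) C_sub coherent that by (rule pointwise_limit_eq)
  have f_Bij: "inj_on (f n) \<Omega>" "f n ` \<Omega> = \<Omega>" for n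
    using f[of n] by (auto simp: Bij_def bij_betw_def)
  have "inj_on ?g \<Omega>"
  proof (rule inj_onI)
    fix x y
    assume "x \<in> \<Omega>" "y \<in> \<Omega>" "?g x = ?g y"
    moreover obtain n where "{x, y} \<subseteq> C n"
      using finite_subset_incseq_Union[OF C(1), of "{x, y}"] \<open>x \<in> \<Omega>\<close> \<open>y \<in> \<Omega>\<close> C(2) by blast
    ultimately have "f n x = f n y"
      using g_eq[of x n] g_eq[of y n] by simp
    with f_Bij(1) show "x = y"
      using \<open>x \<in> \<Omega>\<close> \<open>y \<in> \<Omega>\<close> by (rule inj_onD)
  qed
  moreover have "?g ` \<Omega> = \<Omega>"
  proof
    show "?g ` \<Omega> \<subseteq> \<Omega>"
    proof (rule image_subsetI)
      fix x
      assume "x \<in> \<Omega>"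
      then obtain n where "x \<in> C n"
        using C(2) by blast
      then show "?g x \<in> \<Omega>"
        using g_eq f_Bij(2) \<open>x \<in> \<Omega>\<close> by blast
    qed
    show "\<Omega> \<subseteq> ?g ` \<Omega>"
    proof
      fix y
      assume "y \<in> \<Omega>"
      then obtain n x where "x \<in> C n" "y = f n x"
        using onto by blast
      moreover have "x \<in> \<Omega>"
        using \<open>x \<in> C n\<close> C(2) by blast
      ultimately show "y \<in> ?g ` \<Omega>"
        using g_eq[of x n] by (metis image_eqI)
    qed
  qed
  moreover have "?g \<in> extensional \<Omega>"
    by (simp add: pointwise_limit_def)
  ultimately show ?thesis
    by (simp add: Bij_def bij_betw_def)
qed

lemma infinite_if_meets_incseq_differences:
  assumes "incseq C" "M \<subseteq> (\<Union>n. C n)" "\<And>n. M \<inter> (C (Suc n) - C n) \<noteq> {}"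
  shows "infinite M"
proof
  assume "finite M"
  then obtain n where "M \<subseteq> C n"
    using finite_subset_incseq_Union assms(1,2) by blast
  then show False
    using assms(3)[of n] by blast
qed

lemma back_and_forth_moving_sequence:
  assumes GB: "G \<subseteq> Bij \<Omega>" and "g0 \<in> G" and "\<Sigma> \<subseteq> \<Omega>" and e: "range e \<subseteq> \<Omega>"
    and extend: "\<And>g C. g \<in> G \<Longrightarrow> finite C \<Longrightarrow> C \<subseteq> \<Omega> \<Longrightarrow>
      \<exists>g'\<in>G. \<exists>s\<in>\<Sigma> - C. g' s \<noteq> s \<and> (\<forall>x\<in>C. g' x = g x)"
  obtains f C where "\<And>n. f n \<in> G" "\<And>n. C n \<subseteq> \<Omega>" "\<And>n. C n \<subseteq> C (Suc n)"
    "\<And>n x. x \<in> C n \<Longrightarrow> f (Suc n) x = f n x"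
    "\<And>n. \<exists>s\<in>\<Sigma> \<inter> (C (Suc n) - C n). f (Suc n) s \<noteq> s"
    "\<And>n. e n \<in> C (Suc n) \<inter> f (Suc n) ` C (Suc n)"
proof -
  define P where "P = (\<lambda>(_::nat) x. fst x \<in> G \<and> finite (snd x) \<and> snd x \<subseteq> \<Omega>)"
  define Q where "Q = (\<lambda>n x y. snd x \<subseteq> snd y \<and> (\<forall>z\<in>snd x. fst y z = fst x z)
    \<and> (\<exists>s\<in>\<Sigma> \<inter> (snd y - snd x). fst y s \<noteq> s) \<and> e n \<in> snd y \<inter> fst y ` snd y)"
  have "\<exists>seq. \<forall>n. P n (seq n) \<and> Q n (seq n) (seq (Suc n))"
  proof (rule dependent_nat_choice)
    show "\<exists>x. P 0 x"
      using \<open>g0 \<in> G\<close> by (auto simp: P_def)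
  next
    fix x n
    assume "P n x"
    then obtain h D where x: "x = (h, D)" and "h \<in> G" "finite D" "D \<subseteq> \<Omega>"
      by (cases x) (auto simp: P_def)
    then obtain h' s where h': "h' \<in> G" "s \<in> \<Sigma> - D" "h' s \<noteq> s" "\<forall>x\<in>D. h' x = h x"
      using extend by blast
    have "e n \<in> \<Omega>"
      using e by blast
    moreover have "h' ` \<Omega> = \<Omega>"
      using GB h'(1) by (auto simp: Bij_def bij_betw_def)
    ultimately obtain y where "y \<in> \<Omega>" "h' y = e n"
      by (metis imageE)
    then have "P (Suc n) (h', D \<union> {s, e n, y}) \<and> Q n x (h', D \<union> {s, e n, y})"
      using x h' \<open>finite D\<close> \<open>D \<subseteq> \<Omega>\<close> \<open>\<Sigma> \<subseteq> \<Omega>\<close> \<open>e n \<in> \<Omega>\<close> by (auto simp: P_def Q_def)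
    then show "\<exists>y. P (Suc n) y \<and> Q n x y" ..
  qed
  then obtain seq where P: "\<And>n. P n (seq n)" and Q: "\<And>n. Q n (seq n) (seq (Suc n))"
    by blast
  show thesis
  proof (rule that[of "\<lambda>n. fst (seq n)" "\<lambda>n. snd (seq n)"])
    show "fst (seq n) \<in> G" "snd (seq n) \<subseteq> \<Omega>" for n
      using P[of n] by (simp_all add: P_def)
    show "snd (seq n) \<subseteq> snd (seq (Suc n))"
      "\<exists>s\<in>\<Sigma> \<inter> (snd (seq (Suc n)) - snd (seq n)). fst (seq (Suc n)) s \<noteq> s"
      "e n \<in> snd (seq (Suc n)) \<inter> fst (seq (Suc n)) ` snd (seq (Suc n))" for n
      using Q[of n] by (simp_all add: Q_def)
    show "fst (seq (Suc n)) x = fst (seq n) x" if "x \<in> snd (seq n)" for n x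
      using Q[of n] that by (simp add: Q_def)
  qed
qed

lemma exhausting_moving_sequence:
  assumes "countable \<Omega>" "\<Sigma> \<subseteq> \<Omega>" and GB: "G \<subseteq> Bij \<Omega>" and "G \<noteq> {}"
    and extend: "\<And>g C. g \<in> G \<Longrightarrow> finite C \<Longrightarrow> C \<subseteq> \<Omega> \<Longrightarrow>
      \<exists>g'\<in>G. \<exists>s\<in>\<Sigma> - C. g' s \<noteq> s \<and> (\<forall>x\<in>C. g' x = g x)"
  obtains f C where "\<And>n. f n \<in> Bij \<Omega>" "\<And>n. f n \<in> G" "\<And>n. C n \<subseteq> \<Omega>" "incseq C"
    "(\<Union>n. C n) = \<Omega>" "\<And>n x. x \<in> C n \<Longrightarrow> f (Suc n) x = f n x"
    "\<And>n. \<exists>s\<in>\<Sigma> \<inter> (C (Suc n) - C n). f (Suc n) s \<noteq> s"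
    "\<Omega> \<subseteq> (\<Union>n. f n ` C n)"
proof -
  obtain g0 where "g0 \<in> G"
    using \<open>G \<noteq> {}\<close> by blast
  then have "\<Omega> \<noteq> {}"
    using extend[of g0 "{}"] \<open>\<Sigma> \<subseteq> \<Omega>\<close> by blast
  obtain f C where f: "\<And>n. f n \<in> G" and C: "\<And>n. C n \<subseteq> \<Omega>" "\<And>n. C n \<subseteq> C (Suc n)"
    and coherent: "\<And>n x. x \<in> C n \<Longrightarrow> f (Suc n) x = f n x"
    and moving: "\<And>n. \<exists>s\<in>\<Sigma> \<inter> (C (Suc n) - C n). f (Suc n) s \<noteq> s"
    and back_forth: "\<And>n. from_nat_into \<Omega> n \<in> C (Suc n) \<inter> f (Suc n) ` C (Suc n)"
    using back_and_forth_moving_sequence[OF GB \<open>g0 \<in> G\<close> \<open>\<Sigma> \<subseteq> \<Omega>\<close>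
        range_from_nat_into_subset[OF \<open>\<Omega> \<noteq> {}\<close>] extend]
    by blast
  have enumerated: "x \<in> (\<Union>n. C n)" "x \<in> (\<Union>n. f n ` C n)" if x: "x \<in> \<Omega>" for x
  proof -
    obtain n where "from_nat_into \<Omega> n = x"
      using from_nat_into_surj[OF \<open>countable \<Omega>\<close> x] ..
    then show "x \<in> (\<Union>n. C n)" "x \<in> (\<Union>n. f n ` C n)"
      using back_forth[of n] by blast+
  qed
  have C_Union: "(\<Union>n. C n) = \<Omega>"
  proof
    show "(\<Union>n. C n) \<subseteq> \<Omega>"
      using C(1) by blast
    show "\<Omega> \<subseteq> (\<Union>n. C n)"
      by (rule subsetI) (rule enumerated(1))
  qed
  have onto: "\<Omega> \<subseteq> (\<Union>n. f n ` C n)"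
    by (rule subsetI) (rule enumerated(2))
  have f_Bij: "f n \<in> Bij \<Omega>" for n
    using f[of n] GB by (rule subsetD[rotated])
  have "incseq C"
    using C(2) by (rule incseq_SucI)
  show thesis
    by (rule that[OF f_Bij f C(1) \<open>incseq C\<close> C_Union coherent moving onto])
qed

lemma approximable_Bij_moving_infinitely:
  assumes "countable \<Omega>" "\<Sigma> \<subseteq> \<Omega>" and GB: "G \<subseteq> Bij \<Omega>" and "G \<noteq> {}"
    and extend: "\<And>g C. g \<in> G \<Longrightarrow> finite C \<Longrightarrow> C \<subseteq> \<Omega> \<Longrightarrow>
      \<exists>g'\<in>G. \<exists>s\<in>\<Sigma> - C. g' s \<noteq> s \<and> (\<forall>x\<in>C. g' x = g x)"
  obtains g where "g \<in> Bij \<Omega>" "infinite {x \<in> \<Sigma>. g x \<noteq> x}"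
    "\<And>F. finite F \<Longrightarrow> F \<subseteq> \<Omega> \<Longrightarrow> \<exists>h\<in>G. \<forall>x\<in>F. h x = g x"
proof -
  obtain f C where f: "\<And>n. f n \<in> Bij \<Omega>" "\<And>n. f n \<in> G" and C: "\<And>n. C n \<subseteq> \<Omega>" "incseq C"
    "(\<Union>n. C n) = \<Omega>" and coherent: "\<And>n x. x \<in> C n \<Longrightarrow> f (Suc n) x = f n x"
    and moving: "\<And>n. \<exists>s\<in>\<Sigma> \<inter> (C (Suc n) - C n). f (Suc n) s \<noteq> s"
    and onto: "\<Omega> \<subseteq> (\<Union>n. f n ` C n)"
    using exhausting_moving_sequence[OF assms] by blast
  define g where "g = pointwise_limit f C \<Omega>"
  have g_eq: "g x = f n x" if "x \<in> C n" for n x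
    unfolding g_def using C(2,1) coherent that by (rule pointwise_limit_eq)
  show thesis
  proof (rule that)
    show "g \<in> Bij \<Omega>"
      unfolding g_def using f(1) C(2,3) coherent onto by (rule pointwise_limit_Bij)
    show "infinite {x \<in> \<Sigma>. g x \<noteq> x}"
    proof (rule infinite_if_meets_incseq_differences[OF C(2)])
      show "{x \<in> \<Sigma>. g x \<noteq> x} \<subseteq> (\<Union>n. C n)"
        using C(3) \<open>\<Sigma> \<subseteq> \<Omega>\<close> by blast
      show "{x \<in> \<Sigma>. g x \<noteq> x} \<inter> (C (Suc n) - C n) \<noteq> {}" for n
      proof -
        obtain s where "s \<in> \<Sigma>" "s \<in> C (Suc n) - C n" "f (Suc n) s \<noteq> s"
          using moving[of n] by blast
        then show ?thesis
          using g_eq[of s "Suc n"] by auto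
      qed
    qed
  next
    fix F
    assume "finite F" "F \<subseteq> \<Omega>"
    then obtain n where "F \<subseteq> C n"
      using finite_subset_incseq_Union[OF C(2)] C(3) by blast
    then show "\<exists>h\<in>G. \<forall>x\<in>F. h x = g x"
      using f(2)[of n] g_eq[of _ n] by (metis subsetD)
  qed
qed

theorem corollary11p3:
  fixes \<Omega> :: "'a set" and G :: "('a \<Rightarrow> 'a) set" and \<Sigma> :: "'a set"
  assumes "countable \<Omega>"
    and "subgroup G (BijGroup \<Omega>)"
    and "closedin (sym_topology \<Omega>) G"
    and "\<Sigma> \<subseteq> \<Omega>"
  shows "(\<exists>\<Gamma>. finite \<Gamma> \<and> \<Gamma> \<subseteq> \<Omega> \<and>
            pointwise_stabilizer G \<Gamma> \<subseteq> pointwise_stabilizer (Bij \<Omega>) \<Sigma>)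
       \<or> (\<exists>g\<in>G. infinite {x \<in> \<Sigma>. g x \<noteq> x})"
proof -
  have GB: "G \<subseteq> Bij \<Omega>"
    using subgroup.subset[OF assms(2)] by (simp add: BijGroup_def)
  have "G \<noteq> {}"
    using subgroup.one_closed[OF assms(2)] by blast
  have "\<exists>g\<in>G. infinite {x \<in> \<Sigma>. g x \<noteq> x}"
    if no_finite_base: "\<And>\<Gamma>. finite \<Gamma> \<Longrightarrow> \<Gamma> \<subseteq> \<Omega> \<Longrightarrow>
      \<not> pointwise_stabilizer G \<Gamma> \<subseteq> pointwise_stabilizer (Bij \<Omega>) \<Sigma>"
  proof -
    have extend: "\<exists>g'\<in>G. \<exists>s\<in>\<Sigma> - C. g' s \<noteq> s \<and> (\<forall>x\<in>C. g' x = g x)"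
      if "g \<in> G" "finite C" "C \<subseteq> \<Omega>" for g C
      using subgroup_agreeing_element_moving_outside[OF assms(2,4) that(3)
          no_finite_base[OF that(2,3)] that(1)] .
    obtain g where "g \<in> Bij \<Omega>" "infinite {x \<in> \<Sigma>. g x \<noteq> x}"
      and approx: "\<And>F. finite F \<Longrightarrow> F \<subseteq> \<Omega> \<Longrightarrow> \<exists>h\<in>G. \<forall>x\<in>F. h x = g x"
      using approximable_Bij_moving_infinitely[OF assms(1,4) GB \<open>G \<noteq> {}\<close> extend] by blast
    moreover have "g \<in> G"
      using closedin_sym_topology_pointwise_limit[OF assms(3) \<open>g \<in> Bij \<Omega>\<close> approx] .
    ultimately show ?thesis
      by blast
  qed
  then show ?thesis
    by blast
qed

end
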